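(* For every integer $k \geq 1$, let $\mathcal{b}(k)$ denote the greatest common divisor of all the sums $\sum_{i=1}^{k} b_{n+i}$, $n \geq 0$. Then $$\mathcal{b}(k) = \begin{cases} \gcd\!\left(\tfrac12(B_k - k),\, P_k\right), & \text{if } k \text{ is even};\\ \gcd\!\left(\tfrac12(B_k - k),\, 2Q_k\right), & \text{if } k \text{ is odd}.\end{cases}$$
   Context: The Pell sequence $(P_n)_{n\ge0}$ is defined by $P_0=0$, $P_1=1$, $P_n = 2P_{n-1}+P_{n-2}$. The associated Pell sequence $(Q_n)_{n\ge0}$ is defined by $Q_0=1$, $Q_1=1$, $Q_n=2Q_{n-1}+Q_{n-2}$. The balancing sequence $(B_n)_{n\ge0}$ is defined by $B_0=0$, $B_1=1$, $B_n=6B_{n-1}-B_{n-2}$. The cobalancing sequence $(b_n)_{n\ge0}$ is defined by $b_0=0$, $b_1=0$, $b_n=6b_{n-1}-b_{n-2}+2$. *)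

theory Defs
  imports Main
begin

fun pell :: "nat \<Rightarrow> int" where
  "pell 0 = 0" | "pell (Suc 0) = 1"
| "pell (Suc (Suc n)) = 2 * pell (Suc n) + pell n"

fun assoc_pell :: "nat \<Rightarrow> int" where
  "assoc_pell 0 = 1" | "assoc_pell (Suc 0) = 1"
| "assoc_pell (Suc (Suc n)) = 2 * assoc_pell (Suc n) + assoc_pell n"

fun balancing :: "nat \<Rightarrow> int" where
  "balancing 0 = 0" | "balancing (Suc 0) = 1"
| "balancing (Suc (Suc n)) = 6 * balancing (Suc n) - balancing n"

fun cobalancing :: "nat \<Rightarrow> int" where
  "cobalancing 0 = 0" | "cobalancing (Suc 0) = 0"
| "cobalancing (Suc (Suc n)) = 6 * cobalancing (Suc n) - cobalancing n + 2"

definition cobal_gcd :: "nat \<Rightarrow> int" where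
  "cobal_gcd k = Gcd {(\<Sum>i=1..k. cobalancing (n + i)) | n. True}"

end

theory Submission
  imports Defs
begin

text \<open>The window sums S n = b(n+1) + ... + b(n+k) satisfy the inhomogeneous recurrence
  S(n+2) = 6 S(n+1) - S(n) + 2k, so their gcd is gcd(S 0, S 1, 2k). Writing
  B = P Q and 2 b(k+1) = P(2k+1) - 1 = P(k) Q(k+1) + Q(k) P(k+1) - 1 and using the
  Cassini-type identity Q(k) P(k+1) - P(k) Q(k+1) = (-1)^k, one finds
  S 1 - S 0 = b(k+1) = P(k) Q(k+1) for even k and Q(k) P(k+1) for odd k, while
  2k = 2 P(k) Q(k) - 4 S 0. The coprimality of consecutive Pell and associated Pell
  numbers, together with the parities of P and Q, then identifies
  gcd(b(k+1), 2 P(k) Q(k)) as P(k) or 2 Q(k).\<close>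

lemma Gcd_range_recurrence:
  fixes s :: "nat \<Rightarrow> 'a :: {semiring_Gcd, comm_ring_1}"
  assumes rec: "\<And>n. s (Suc (Suc n)) = a * s (Suc n) - s n + c"
  shows "Gcd (range s) = gcd (s 0) (gcd (s 1) c)"
proof (rule Gcd_eqI)
  show "normalize (gcd (s 0) (gcd (s 1) c)) = gcd (s 0) (gcd (s 1) c)"
    by simp
next
  fix b assume "b \<in> range s"
  then obtain m where b: "b = s m" by blast
  let ?g = "gcd (s 0) (gcd (s 1) c)"
  have "?g dvd s 0" "?g dvd s 1" "?g dvd c"
    by (meson dvd_trans gcd_dvd1 gcd_dvd2)+
  then have "?g dvd s n \<and> ?g dvd s (Suc n)" for n
    by (induction n) (simp_all add: rec)
  then show "?g dvd b" unfolding b by blast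
next
  fix d assume "\<And>b. b \<in> range s \<Longrightarrow> d dvd b"
  then have "d dvd s 0" "d dvd s 1" "d dvd s 2" by auto
  moreover have "c = s 2 - a * s 1 + s 0"
    using rec[of 0] by (simp add: numeral_2_eq_2)
  ultimately show "d dvd gcd (s 0) (gcd (s 1) c)"
    by simp
qed

lemma gcd_gcd_add_mult:
  fixes a b c x y :: "'a :: ring_gcd"
  shows "gcd a (gcd (x * a + b) (y * a + c)) = gcd a (gcd b c)"
proof -
  have "gcd a (gcd (x * a + b) (y * a + c)) = gcd (gcd a (x * a + b)) (gcd a (y * a + c))"
    by (simp add: gcd.assoc gcd.left_commute)
  also have "\<dots> = gcd (gcd a b) (gcd a c)"
    by (simp only: gcd_add_mult)
  also have "\<dots> = gcd a (gcd b c)"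
    by (simp add: gcd.assoc gcd.left_commute)
  finally show ?thesis .
qed

lemma assoc_pell_add_pell: "assoc_pell n + pell n = pell (Suc n)"
  by (induction n rule: pell.induct) auto

lemma pell_add: "pell (m + n) = pell m * assoc_pell n + assoc_pell m * pell n"
proof (induction n rule: pell.induct)
  case 1
  then show ?case by simp
next
  case 2
  then show ?case using assoc_pell_add_pell[of m] by simp
next
  case (3 n)
  have "pell (m + Suc (Suc n)) = 2 * pell (m + Suc n) + pell (m + n)"
    by simp
  also have "\<dots> = pell m * assoc_pell (Suc (Suc n)) + assoc_pell m * pell (Suc (Suc n))"
    using 3 by (simp add: algebra_simps)
  finally show ?case .
qed

lemma pell_Suc_double: "pell (Suc (2 * n)) = pell n * assoc_pell (Suc n) + assoc_pell n * pell (Suc n)"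
  using pell_add[of n "Suc n"] by (simp add: mult_2)

lemma balancing_eq_pell_double: "2 * balancing n = pell (2 * n)"
proof (induction n rule: balancing.induct)
  case (3 n)
  have "pell (2 * Suc (Suc n)) = 6 * pell (2 * Suc n) - pell (2 * n)"
    by (simp add: numeral_eq_Suc)
  with 3 show ?case by simp
qed (simp_all add: numeral_eq_Suc)

lemma balancing_eq_pell_mult_assoc_pell: "balancing n = pell n * assoc_pell n"
proof -
  have "2 * balancing n = pell (n + n)"
    using balancing_eq_pell_double[of n] by (simp only: mult_2)
  also have "\<dots> = 2 * (pell n * assoc_pell n)"
    using pell_add[of n n] by simp
  finally show ?thesis by simp
qed

lemma balancing_Suc_diff: "balancing (Suc n) - balancing n = pell (Suc (2 * n))"
  using balancing_eq_pell_double[of n] balancing_eq_pell_double[of "Suc n"] by simp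

lemma assoc_pell_pell_cassini:
  "assoc_pell n * pell (Suc n) - pell n * assoc_pell (Suc n) = (-1) ^ n"
  by (induction n) (simp_all add: algebra_simps)

lemma odd_assoc_pell: "odd (assoc_pell n)"
  by (induction n rule: assoc_pell.induct) auto

lemma even_pell_iff: "even (pell n) \<longleftrightarrow> even n"
  by (induction n rule: pell.induct) auto

lemma coprime_pell_Suc: "coprime (pell n) (pell (Suc n))"
proof (induction n)
  case (Suc n)
  then have "coprime (pell (Suc n)) (2 * pell (Suc n) + pell n)"
    by (metis coprime_commute gcd_add_mult coprime_iff_gcd_eq_1)
  then show ?case by simp
qed simp

lemma coprime_assoc_pell_Suc: "coprime (assoc_pell n) (assoc_pell (Suc n))"
proof (induction n)
  case (Suc n)
  then have "coprime (assoc_pell (Suc n)) (2 * assoc_pell (Suc n) + assoc_pell n)"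
    by (metis coprime_commute gcd_add_mult coprime_iff_gcd_eq_1)
  then show ?case by simp
qed simp

lemma two_cobalancing_Suc: "2 * cobalancing (Suc n) = balancing (Suc n) - balancing n - 1"
  by (induction n rule: cobalancing.induct) (auto simp: algebra_simps)

lemma cobalancing_Suc_eq_pell_assoc_pell:
  "cobalancing (Suc n) =
    (if even n then pell n * assoc_pell (Suc n) else assoc_pell n * pell (Suc n))"
proof -
  have "2 * cobalancing (Suc n) = pell n * assoc_pell (Suc n) + assoc_pell n * pell (Suc n) - 1"
    using two_cobalancing_Suc[of n] balancing_Suc_diff[of n] pell_Suc_double[of n] by simp
  then show ?thesis
    using assoc_pell_pell_cassini[of n] by (cases "even n") simp_all
qed

definition cobalancing_window :: "nat \<Rightarrow> nat \<Rightarrow> int" where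
  "cobalancing_window k n = (\<Sum>i=1..k. cobalancing (n + i))"

lemma two_cobalancing_window:
  "2 * cobalancing_window k n = balancing (n + k) - balancing n - int k"
proof (induction k)
  case (Suc k)
  then show ?case
    using two_cobalancing_Suc[of "n + k"] by (simp add: cobalancing_window_def algebra_simps)
qed (simp add: cobalancing_window_def)

lemma cobalancing_window_0: "2 * cobalancing_window k 0 = pell k * assoc_pell k - int k"
  using two_cobalancing_window[of k 0] by (simp add: balancing_eq_pell_mult_assoc_pell)

lemma cobalancing_window_1: "cobalancing_window k 1 = cobalancing_window k 0 + cobalancing (Suc k)"
proof -
  have "cobalancing_window k 1 + cobalancing 1 = cobalancing_window k 0 + cobalancing (Suc k)"
    unfolding cobalancing_window_def by (induction k) simp_all
  then show ?thesis by simp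
qed

lemma cobalancing_window_rec:
  "cobalancing_window k (Suc (Suc n)) =
    6 * cobalancing_window k (Suc n) - cobalancing_window k n + 2 * int k"
  by (simp add: cobalancing_window_def sum.distrib sum_subtractf sum_distrib_left)

lemma gcd_cobalancing_Suc_pell_assoc_pell:
  "gcd (cobalancing (Suc k)) (2 * (pell k * assoc_pell k)) =
    normalize (if even k then pell k else 2 * assoc_pell k)"
proof (cases "even k")
  case True
  have "coprime (assoc_pell (Suc k)) (2 * assoc_pell k)"
    using odd_assoc_pell[of "Suc k"] coprime_assoc_pell_Suc[of k] by (simp add: coprime_commute)
  then have "gcd (pell k * assoc_pell (Suc k)) (pell k * (2 * assoc_pell k)) = normalize (pell k)"
    by (simp add: gcd_mult_left)
  with True show ?thesis
    by (simp add: cobalancing_Suc_eq_pell_assoc_pell ac_simps)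
next
  case False
  then obtain p where p: "pell (Suc k) = 2 * p"
    using even_pell_iff[of "Suc k"] by auto
  have "coprime p (pell k)"
    using coprime_pell_Suc[of k] unfolding p by (simp add: coprime_commute)
  then have "gcd (2 * assoc_pell k * p) (2 * assoc_pell k * pell k) = normalize (2 * assoc_pell k)"
    by (simp add: gcd_mult_left)
  moreover have "cobalancing (Suc k) = 2 * assoc_pell k * p"
    using False p by (simp add: cobalancing_Suc_eq_pell_assoc_pell)
  ultimately show ?thesis
    using False by (simp add: ac_simps)
qed

theorem theorem23:
  fixes k :: nat
  assumes "k \<ge> 1"
  shows "cobal_gcd k =
    (if even k then gcd ((balancing k - int k) div 2) (pell k)
     else gcd ((balancing k - int k) div 2) (2 * assoc_pell k))"
proof -
  let ?S = "cobalancing_window k"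
  have S0: "(balancing k - int k) div 2 = ?S 0"
    using two_cobalancing_window[of k 0] by simp
  have S1: "?S 1 = 1 * ?S 0 + cobalancing (Suc k)"
    using cobalancing_window_1[of k] by simp
  have two_k: "2 * int k = (-4) * ?S 0 + 2 * (pell k * assoc_pell k)"
    using cobalancing_window_0[of k] by simp
  have "cobal_gcd k = Gcd (range ?S)"
    by (simp add: cobal_gcd_def cobalancing_window_def full_SetCompr_eq)
  also have "\<dots> = gcd (?S 0) (gcd (?S 1) (2 * int k))"
    by (rule Gcd_range_recurrence) (rule cobalancing_window_rec)
  also have "\<dots> = gcd (?S 0) (gcd (1 * ?S 0 + cobalancing (Suc k))
      ((-4) * ?S 0 + 2 * (pell k * assoc_pell k)))"
    by (simp only: S1 two_k)
  also have "\<dots> = gcd (?S 0) (if even k then pell k else 2 * assoc_pell k)"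
    by (simp only: gcd_gcd_add_mult gcd_cobalancing_Suc_pell_assoc_pell normalize_gcd_right)
  finally show ?thesis
    by (simp add: S0)
qed

end
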